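(* Let $G$ be a finite group acting on a weighted simplicial complex $\Omega$ on $[n]$. Then there exist a weighted simplicial complex $\Omega'$ on $[n]$, obtained from $\Omega$ by increasing the weights of the facets (i.e. $\Omega'(S)=\Omega(S)$ for every $S$ that is not a facet of $\Omega$, $\Omega'$ has the same facets as $\Omega$, and $\Omega'(F)\geq\Omega(F)$ for each facet $F$), and an action of $G$ on $\Omega'$ which is free, whose action on $[n]$ is the given one, and which refines the given action, in the sense that there is a $G$-linear map $\tilde c\colon \widetilde{\mathcal F}(\Omega')\to\widetilde{\mathcal F}(\Omega)$ with $c\circ\tilde c=c'$, where $c,c'$ are the collapse maps of $\Omega,\Omega'$.
   Context: Write $[n]=\{0,\ldots,n\}$ and $\mathcal P_n$ for its power set. A weighted simplicial complex (wsc) on $[n]$ is a function $\Omega\colon\mathcal P_n\to\mathbb N=\{0,1,2,\ldots\}$ such that $S_1\subseteq S_2$ implies that $\Omega(S_1)$ divides $\Omega(S_2)$. A set $S$ with $\Omega(S)\neq0$ is a simplex; it is assumed that every singleton is a simplex. A facet is a simplex maximal under inclusion; $\mathcal F$ is the set of facets. The multiset $\widetilde{\mathcal F}=\widetilde{\mathcal F}(\Omega)$ contains each facet $F$ exactly $\Omega(F)$ times, and the collapse map $c\colon\widetilde{\mathcal F}\to\mathcal F$ sends each copy to the underlying facet. A map $f\colon X\to Y$ between $G$-sets is $G$-linear if $f(gx)=gf(x)$. A group action of $G$ on the wsc $\Omega$ consists of an action of $G$ on $[n]$ such that $\Omega(gS)=\Omega(S)$ for all $S\in\mathcal P_n$,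 $g\in G$ (this induces an action on $\mathcal F$), together with an action of $G$ on $\widetilde{\mathcal F}$ such that the collapse map $c$ is $G$-linear. The action on $\Omega$ is free if the action of $G$ on $\widetilde{\mathcal F}$ is free (every element of $\widetilde{\mathcal F}$ has trivial stabiliser). *)

theory Defs
  imports "HOL-Algebra.Group_Action"
begin

text \<open>Vertex set [n] = {0..n}; a wsc is a function on subsets of [n] (values on
other sets are irrelevant).\<close>

definition wsc :: "nat \<Rightarrow> (nat set \<Rightarrow> nat) \<Rightarrow> bool" where
  "wsc n \<Omega> \<longleftrightarrow>
     (\<forall>S1 S2. S1 \<subseteq> S2 \<and> S2 \<subseteq> {0..n} \<longrightarrow> \<Omega> S1 dvd \<Omega> S2) \<and>
     (\<forall>i\<in>{0..n}. \<Omega> {i} \<noteq> 0)"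

definition simplex :: "nat \<Rightarrow> (nat set \<Rightarrow> nat) \<Rightarrow> nat set \<Rightarrow> bool" where
  "simplex n \<Omega> S \<longleftrightarrow> S \<subseteq> {0..n} \<and> \<Omega> S \<noteq> 0"

definition facets :: "nat \<Rightarrow> (nat set \<Rightarrow> nat) \<Rightarrow> nat set set" where
  "facets n \<Omega> = {F. simplex n \<Omega> F \<and> (\<forall>T. simplex n \<Omega> T \<and> F \<subseteq> T \<longrightarrow> T = F)}"

text \<open>The multiset of facets, each facet F repeated \<Omega> F times, realised as
pairs (F, k) with k < \<Omega> F; the collapse map is fst.\<close>

definition facets_tilde :: "nat \<Rightarrow> (nat set \<Rightarrow> nat) \<Rightarrow> (nat set \<times> nat) set" where
  "facets_tilde n \<Omega> = {(F, k). F \<in> facets n \<Omega> \<and> k < \<Omega> F}"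

definition collapse :: "nat set \<times> nat \<Rightarrow> nat set" where
  "collapse = fst"

definition wsc_action ::
  "('g, 'b) monoid_scheme \<Rightarrow> nat \<Rightarrow> (nat set \<Rightarrow> nat) \<Rightarrow> ('g \<Rightarrow> nat \<Rightarrow> nat)
    \<Rightarrow> ('g \<Rightarrow> nat set \<times> nat \<Rightarrow> nat set \<times> nat) \<Rightarrow> bool" where
  "wsc_action G n \<Omega> \<phi> \<psi> \<longleftrightarrow>
     group_action G {0..n} \<phi> \<and>
     (\<forall>g\<in>carrier G. \<forall>S. S \<subseteq> {0..n} \<longrightarrow> \<Omega> (\<phi> g ` S) = \<Omega> S) \<and>
     group_action G (facets_tilde n \<Omega>) \<psi> \<and>
     (\<forall>g\<in>carrier G. \<forall>x\<in>facets_tilde n \<Omega>. collapse (\<psi> g x) = \<phi> g ` collapse x)"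

definition free_wsc_action ::
  "('g, 'b) monoid_scheme \<Rightarrow> nat \<Rightarrow> (nat set \<Rightarrow> nat)
    \<Rightarrow> ('g \<Rightarrow> nat set \<times> nat \<Rightarrow> nat set \<times> nat) \<Rightarrow> bool" where
  "free_wsc_action G n \<Omega> \<psi> \<longleftrightarrow>
     (\<forall>g\<in>carrier G. \<forall>x\<in>facets_tilde n \<Omega>. \<psi> g x = x \<longrightarrow> g = \<one>\<^bsub>G\<^esub>)"

end

theory Submission
  imports Defs
begin

text \<open>Multiply the weight of every facet by N = |G|. The copies of a facet F in the new complex
are then indexed by pairs (c, h) of a copy c of F in the old complex and a group element h
(copy number j N + \<iota> h for c = (F, j), where \<iota> numbers the elements of G). Let G act on these
pairs diagonally: by the given action on c and by left translation on h. Left translation is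
free, hence so is the diagonal action, and forgetting h is the required G-linear map to the
old copies.\<close>

lemma group_actionI:
  fixes G (structure)
  assumes "group G"
    and closed: "\<And>g x. g \<in> carrier G \<Longrightarrow> x \<in> E \<Longrightarrow> \<phi> g x \<in> E"
    and extensional: "\<And>g. g \<in> carrier G \<Longrightarrow> \<phi> g \<in> extensional E"
    and compose: "\<And>g h x. \<lbrakk>g \<in> carrier G; h \<in> carrier G; x \<in> E\<rbrakk>
                    \<Longrightarrow> \<phi> (g \<otimes>\<^bsub>G\<^esub> h) x = \<phi> g (\<phi> h x)"
    and one: "\<And>x. x \<in> E \<Longrightarrow> \<phi> \<one>\<^bsub>G\<^esub> x = x"
  shows "group_action G E \<phi>"
proof -
  interpret group G by fact
  have Bij: "\<phi> g \<in> Bij E" if g: "g \<in> carrier G" for g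
  proof -
    have "bij_betw (\<phi> g) E E"
      by (rule bij_betw_byWitness[where f' = "\<phi> (inv g)"])
        (use g closed compose one in \<open>auto simp flip: compose\<close>)
    then show ?thesis
      using extensional[OF g] by (simp add: Bij_def)
  qed
  have "\<phi> (g \<otimes> h) = compose E (\<phi> g) (\<phi> h)" if "g \<in> carrier G" "h \<in> carrier G" for g h
    by (rule extensionalityI[OF extensional])
      (use that compose in \<open>simp_all add: compose_def\<close>)
  then have "\<phi> \<in> hom G (BijGroup E)"
    by (intro homI) (simp_all add: BijGroup_def Bij)
  then show ?thesis
    unfolding group_action_def group_hom_def group_hom_axioms_def
    using group_BijGroup by (simp add: is_group)
qed

lemma (in group_action) action_one: "x \<in> E \<Longrightarrow> \<phi> \<one> x = x"
  by (metis id_eq_one restrict_apply')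

lemma (in group_action) action_closed: "g \<in> carrier G \<Longrightarrow> x \<in> E \<Longrightarrow> \<phi> g x \<in> E"
  using element_image by blast

lemma (in group_action) is_group: "group G"
  using group_hom group_hom.axioms(1) by blast

lemma (in group_action) image_inv_image:
  assumes "g \<in> carrier G" "S \<subseteq> E"
  shows "\<phi> (inv g) ` \<phi> g ` S = S"
proof -
  interpret group G by (rule is_group)
  have "\<phi> (inv g) (\<phi> g x) = x" if "x \<in> S" for x
    using that assms composition_rule[of x "inv g" g] action_one by auto
  then show ?thesis
    by (simp add: image_comp cong: image_cong)
qed

definition prod_action ::
  "('g \<Rightarrow> 'a \<Rightarrow> 'a) \<Rightarrow> ('g \<Rightarrow> 'c \<Rightarrow> 'c) \<Rightarrow> 'a set \<Rightarrow> 'c set \<Rightarrow> 'g \<Rightarrow> 'a \<times> 'c \<Rightarrow> 'a \<times> 'c" where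
  "prod_action \<phi> \<chi> A C g = (\<lambda>(a, c) \<in> A \<times> C. (\<phi> g a, \<chi> g c))"

lemma group_action_prod_action:
  assumes "group_action G A \<phi>" and "group_action G C \<chi>"
  shows "group_action G (A \<times> C) (prod_action \<phi> \<chi> A C)"
proof -
  interpret \<phi>: group_action G A \<phi> by fact
  interpret \<chi>: group_action G C \<chi> by fact
  show ?thesis
    by (rule group_actionI)
      (auto simp: prod_action_def \<phi>.is_group \<phi>.action_closed \<chi>.action_closed
        \<phi>.composition_rule \<chi>.composition_rule \<phi>.action_one \<chi>.action_one)
qed

definition left_translation :: "('g, 'b) monoid_scheme \<Rightarrow> 'g \<Rightarrow> 'g \<Rightarrow> 'g" where
  "left_translation G g = (\<lambda>h \<in> carrier G. g \<otimes>\<^bsub>G\<^esub> h)"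

lemma (in group) group_action_left_translation: "group_action G (carrier G) (left_translation G)"
  by (rule group_actionI) (auto simp: left_translation_def is_group m_assoc)

definition transport_action :: "('a \<Rightarrow> 'c) \<Rightarrow> 'a set \<Rightarrow> ('g \<Rightarrow> 'a \<Rightarrow> 'a) \<Rightarrow> 'g \<Rightarrow> 'c \<Rightarrow> 'c" where
  "transport_action \<beta> A \<phi> g = (\<lambda>c \<in> \<beta> ` A. \<beta> (\<phi> g (inv_into A \<beta> c)))"

lemma transport_action_image:
  assumes "inj_on \<beta> A" and "a \<in> A"
  shows "transport_action \<beta> A \<phi> g (\<beta> a) = \<beta> (\<phi> g a)"
  using assms by (simp add: transport_action_def)

lemma group_action_transport_action:
  assumes "group_action G A \<phi>" and "inj_on \<beta> A"
  shows "group_action G (\<beta> ` A) (transport_action \<beta> A \<phi>)"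
proof -
  interpret group_action G A \<phi> by fact
  show ?thesis
    by (rule group_actionI)
      (auto simp: is_group transport_action_image assms(2) action_closed composition_rule action_one,
       simp add: transport_action_def)
qed

lemma transported_diagonal_action:
  fixes G (structure)
  assumes \<psi>: "group_action G A \<psi>" and \<beta>: "inj_on \<beta> (A \<times> carrier G)"
  defines "\<psi>' \<equiv> transport_action \<beta> (A \<times> carrier G) (prod_action \<psi> (left_translation G) A (carrier G))"
  shows "group_action G (\<beta> ` (A \<times> carrier G)) \<psi>'"
    and "\<lbrakk>a \<in> A; h \<in> carrier G\<rbrakk> \<Longrightarrow> \<psi>' g (\<beta> (a, h)) = \<beta> (\<psi> g a, g \<otimes>\<^bsub>G\<^esub> h)"
    and "\<lbrakk>g \<in> carrier G; y \<in> \<beta> ` (A \<times> carrier G); \<psi>' g y = y\<rbrakk> \<Longrightarrow> g = \<one>\<^bsub>G\<^esub>"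
proof -
  interpret group G
    using \<psi> by (rule group_action.is_group)
  show "group_action G (\<beta> ` (A \<times> carrier G)) \<psi>'"
    unfolding \<psi>'_def
    using \<beta> group_action_prod_action[OF \<psi> group_action_left_translation]
    by (rule group_action_transport_action[rotated])
  show \<psi>'_\<beta>: "\<psi>' g (\<beta> (a, h)) = \<beta> (\<psi> g a, g \<otimes> h)" if "a \<in> A" "h \<in> carrier G" for a h g
    using that \<beta> by (simp add: \<psi>'_def transport_action_image prod_action_def left_translation_def)
  assume g: "g \<in> carrier G" and "y \<in> \<beta> ` (A \<times> carrier G)" and fixed: "\<psi>' g y = y"
  then obtain a h where a: "a \<in> A" and h: "h \<in> carrier G" and y: "y = \<beta> (a, h)"
    by auto
  have "\<beta> (\<psi> g a, g \<otimes> h) = \<beta> (a, h)"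
    using fixed \<psi>'_\<beta>[OF a h] y by simp
  then have "(\<psi> g a, g \<otimes> h) = (a, h)"
    by (rule inj_onD[OF \<beta>]) (simp_all add: a h g group_action.action_closed[OF \<psi>])
  then show "g = \<one>"
    using g h by (simp add: r_cancel_one)
qed

text \<open>An element (a, k) of stretch N A stands for copy number k mod N of (a, k div N) \<in> A.\<close>

definition stretch :: "nat \<Rightarrow> ('a \<times> nat) set \<Rightarrow> ('a \<times> nat) set" where
  "stretch N A = {(a, k). (a, k div N) \<in> A}"

definition shrink :: "nat \<Rightarrow> 'a \<times> nat \<Rightarrow> 'a \<times> nat" where
  "shrink N = (\<lambda>(a, k). (a, k div N))"

lemma mem_stretch_iff: "y \<in> stretch N A \<longleftrightarrow> shrink N y \<in> A"
  by (simp add: stretch_def shrink_def split: prod.split)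

lemma fst_shrink [simp]: "fst (shrink N y) = fst y"
  by (simp add: shrink_def split: prod.split)

lemma bij_betw_div_mod_encoding:
  fixes N :: nat
  assumes \<iota>: "bij_betw \<iota> H {0..<N}" and "0 < N"
  shows "bij_betw (\<lambda>((a, j), h). (a, j * N + \<iota> h)) (X \<times> H) (stretch N X)"
    (is "bij_betw ?encode _ ?Y")
proof (rule bij_betw_byWitness[where f' = "\<lambda>(a, k). ((a, k div N), inv_into H \<iota> (k mod N))"])
  have \<iota>_less: "\<iota> h < N" if "h \<in> H" for h
    using \<iota> that by (auto simp: bij_betw_def)
  show "\<forall>x\<in>X \<times> H. (\<lambda>(a, k). ((a, k div N), inv_into H \<iota> (k mod N))) (?encode x) = x"
  proof
    fix x
    assume "x \<in> X \<times> H"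
    then obtain a j h where "x = ((a, j), h)" "h \<in> H"
      by auto
    then show "(\<lambda>(a, k). ((a, k div N), inv_into H \<iota> (k mod N))) (?encode x) = x"
      using \<iota>_less[of h] \<iota> by (simp add: bij_betw_def)
  qed
  have "(j * N + \<iota> h) div N = j" if "h \<in> H" for j h
    using \<iota>_less[OF that] by simp
  then show "?encode ` (X \<times> H) \<subseteq> ?Y"
    by (auto simp: stretch_def)
  have "k mod N \<in> \<iota> ` H" for k
    using \<iota> \<open>0 < N\<close> by (simp add: bij_betw_def)
  then show "\<forall>y\<in>?Y. ?encode ((\<lambda>(a, k). ((a, k div N), inv_into H \<iota> (k mod N))) y) = y"
    "(\<lambda>(a, k). ((a, k div N), inv_into H \<iota> (k mod N))) ` ?Y \<subseteq> X \<times> H"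
    by (auto simp: stretch_def f_inv_into_f inv_into_into)
qed

lemma ex_free_action_stretch:
  fixes G :: "('g, 'b) monoid_scheme" (structure) and A :: "('a \<times> nat) set"
  assumes \<psi>: "group_action G A \<psi>" and "finite (carrier G)" and N: "N = card (carrier G)"
  shows "\<exists>\<psi>'. group_action G (stretch N A) \<psi>' \<and>
           (\<forall>g\<in>carrier G. \<forall>y\<in>stretch N A. \<psi>' g y = y \<longrightarrow> g = \<one>) \<and>
           (\<forall>g\<in>carrier G. \<forall>y\<in>stretch N A. shrink N (\<psi>' g y) = \<psi> g (shrink N y))"
proof -
  interpret group G
    using \<psi> by (rule group_action.is_group)
  have "0 < N"
    using \<open>finite (carrier G)\<close> by (auto simp: N card_gt_0_iff)
  obtain \<iota> where \<iota>: "bij_betw \<iota> (carrier G) {0..<N}"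
    using ex_bij_betw_finite_nat[OF \<open>finite (carrier G)\<close>] N by blast
  define encode :: "('a \<times> nat) \<times> 'g \<Rightarrow> 'a \<times> nat" where "encode = (\<lambda>((a, j), h). (a, j * N + \<iota> h))"
  have "bij_betw encode (A \<times> carrier G) (stretch N A)"
    unfolding encode_def by (rule bij_betw_div_mod_encoding[OF \<iota> \<open>0 < N\<close>])
  then have stretch: "stretch N A = encode ` (A \<times> carrier G)" and "inj_on encode (A \<times> carrier G)"
    by (auto simp: bij_betw_def)
  have shrink_encode: "shrink N (encode (a, h)) = a" if "h \<in> carrier G" for a h
  proof -
    have "\<iota> h < N"
      using \<iota> that by (auto simp: bij_betw_def)
    then show ?thesis
      by (simp add: shrink_def encode_def split: prod.split)
  qed
  define \<psi>' where
    "\<psi>' = transport_action encode (A \<times> carrier G) (prod_action \<psi> (left_translation G) A (carrier G))"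
  note \<psi>' = transported_diagonal_action[OF \<psi> \<open>inj_on encode (A \<times> carrier G)\<close>,
    folded \<psi>'_def, folded stretch]
  have "shrink N (\<psi>' g y) = \<psi> g (shrink N y)" if "g \<in> carrier G" and "y \<in> stretch N A" for g y
  proof -
    obtain a h where "a \<in> A" "h \<in> carrier G" "y = encode (a, h)"
      using \<open>y \<in> stretch N A\<close> unfolding stretch by blast
    then show ?thesis
      using \<psi>'(2) \<open>g \<in> carrier G\<close> by (simp add: shrink_encode)
  qed
  with \<psi>'(1,3) show ?thesis
    by blast
qed

lemma image_facet_in_facets:
  assumes "bij_betw \<sigma> {0..n} {0..n}"
    and "\<And>S. S \<subseteq> {0..n} \<Longrightarrow> \<Omega> (\<sigma> ` S) = \<Omega> S"
    and "F \<in> facets n \<Omega>"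
  shows "\<sigma> ` F \<in> facets n \<Omega>"
  unfolding facets_def
proof (intro CollectI conjI allI impI)
  have F: "F \<subseteq> {0..n}" "\<Omega> F \<noteq> 0"
    and F_max: "\<And>T. simplex n \<Omega> T \<Longrightarrow> F \<subseteq> T \<Longrightarrow> T = F"
    using assms(3) by (auto simp: facets_def simplex_def)
  moreover have "\<sigma> ` F \<subseteq> {0..n}"
    using F(1) assms(1) by (metis bij_betw_imp_surj_on image_mono)
  ultimately show "simplex n \<Omega> (\<sigma> ` F)"
    using assms(2) by (simp add: simplex_def)
  fix T
  assume T: "simplex n \<Omega> T \<and> \<sigma> ` F \<subseteq> T"
  then have "T \<subseteq> \<sigma> ` {0..n}"
    using assms(1) by (simp add: simplex_def bij_betw_imp_surj_on)
  then obtain T' where T': "T' \<subseteq> {0..n}" "T = \<sigma> ` T'"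
    by (rule subset_imageE)
  have "F \<subseteq> T'"
  proof
    fix x
    assume "x \<in> F"
    then have "\<sigma> x \<in> \<sigma> ` T'"
      using T T'(2) by blast
    then show "x \<in> T'"
      using \<open>x \<in> F\<close> F(1) T'(1) assms(1) inj_on_image_mem_iff[of \<sigma> "{0..n}" x T']
      by (auto simp: bij_betw_def)
  qed
  moreover have "simplex n \<Omega> T'"
    using T T' assms(2) by (simp add: simplex_def)
  ultimately have "T' = F"
    using F_max by blast
  then show "T = \<sigma> ` F"
    using T'(2) by simp
qed

lemma image_in_facets_iff:
  assumes "group_action G {0..n} \<phi>"
    and "\<And>g S. g \<in> carrier G \<Longrightarrow> S \<subseteq> {0..n} \<Longrightarrow> \<Omega> (\<phi> g ` S) = \<Omega> S"
    and "g \<in> carrier G" and "S \<subseteq> {0..n}"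
  shows "\<phi> g ` S \<in> facets n \<Omega> \<longleftrightarrow> S \<in> facets n \<Omega>"
proof -
  interpret group_action G "{0..n}" \<phi> by fact
  interpret group G by (rule is_group)
  have "\<phi> h ` F \<in> facets n \<Omega>" if "h \<in> carrier G" "F \<in> facets n \<Omega>" for h F
    using that assms(2) bij_prop0 by (intro image_facet_in_facets) (auto simp: Bij_def)
  then show ?thesis
    using assms(3,4) image_inv_image by (metis inv_closed)
qed

definition scale_facets :: "nat \<Rightarrow> (nat set \<Rightarrow> nat) \<Rightarrow> nat \<Rightarrow> nat set \<Rightarrow> nat" where
  "scale_facets n \<Omega> N S = (if S \<in> facets n \<Omega> then \<Omega> S * N else \<Omega> S)"

lemma simplex_scale_facets: "0 < N \<Longrightarrow> simplex n (scale_facets n \<Omega> N) = simplex n \<Omega>"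
  by (auto simp: fun_eq_iff simplex_def scale_facets_def)

lemma facets_scale_facets: "0 < N \<Longrightarrow> facets n (scale_facets n \<Omega> N) = facets n \<Omega>"
  by (simp add: facets_def simplex_scale_facets)

lemma facets_tilde_scale_facets:
  "0 < N \<Longrightarrow> facets_tilde n (scale_facets n \<Omega> N) = stretch N (facets_tilde n \<Omega>)"
  by (auto simp: facets_tilde_def stretch_def facets_scale_facets scale_facets_def div_less_iff_less_mult)

lemma wsc_scale_facets:
  assumes "wsc n \<Omega>" and "0 < N"
  shows "wsc n (scale_facets n \<Omega> N)"
  unfolding wsc_def
proof (intro conjI allI impI ballI)
  fix S1 S2
  assume S: "S1 \<subseteq> S2 \<and> S2 \<subseteq> {0..n}"
  show "scale_facets n \<Omega> N S1 dvd scale_facets n \<Omega> N S2"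
  proof (cases "S1 \<in> facets n \<Omega> \<and> \<Omega> S2 \<noteq> 0")
    case True
    then have "S2 = S1"
      using S by (auto simp: facets_def simplex_def)
    then show ?thesis by simp
  next
    case False
    moreover have "\<Omega> S1 dvd \<Omega> S2"
      using assms(1) S by (auto simp: wsc_def)
    ultimately show ?thesis
      by (auto simp: scale_facets_def facets_def simplex_def)
  qed
next
  fix i :: nat
  assume "i \<in> {0..n}"
  then show "scale_facets n \<Omega> N {i} \<noteq> 0"
    using assms by (auto simp: wsc_def scale_facets_def)
qed

lemma scale_facets_image:
  assumes "group_action G {0..n} \<phi>"
    and "\<And>g S. g \<in> carrier G \<Longrightarrow> S \<subseteq> {0..n} \<Longrightarrow> \<Omega> (\<phi> g ` S) = \<Omega> S"
    and "g \<in> carrier G" and "S \<subseteq> {0..n}"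
  shows "scale_facets n \<Omega> N (\<phi> g ` S) = scale_facets n \<Omega> N S"
  unfolding scale_facets_def using image_in_facets_iff[OF assms] assms(2)[OF assms(3,4)] by simp

theorem proposition2p7:
  fixes G :: "('g, 'b) monoid_scheme"
    and n :: nat
    and \<Omega> :: "nat set \<Rightarrow> nat"
    and \<phi> :: "'g \<Rightarrow> nat \<Rightarrow> nat"
    and \<psi> :: "'g \<Rightarrow> nat set \<times> nat \<Rightarrow> nat set \<times> nat"
  assumes "group G" and "finite (carrier G)"
    and "wsc n \<Omega>"
    and "wsc_action G n \<Omega> \<phi> \<psi>"
  shows "\<exists>\<Omega>' \<psi>'. wsc n \<Omega>' \<and>
           (\<forall>S. S \<subseteq> {0..n} \<and> S \<notin> facets n \<Omega> \<longrightarrow> \<Omega>' S = \<Omega> S) \<and>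
           facets n \<Omega>' = facets n \<Omega> \<and>
           (\<forall>F\<in>facets n \<Omega>. \<Omega> F \<le> \<Omega>' F) \<and>
           wsc_action G n \<Omega>' \<phi> \<psi>' \<and>
           free_wsc_action G n \<Omega>' \<psi>' \<and>
           (\<exists>ct. ct \<in> facets_tilde n \<Omega>' \<rightarrow> facets_tilde n \<Omega> \<and>
                 (\<forall>g\<in>carrier G. \<forall>x\<in>facets_tilde n \<Omega>'. ct (\<psi>' g x) = \<psi> g (ct x)) \<and>
                 (\<forall>x\<in>facets_tilde n \<Omega>'. collapse (ct x) = collapse x))"
proof -
  interpret group G by fact
  have \<phi>: "group_action G {0..n} \<phi>"
    and \<Omega>_\<phi>: "\<And>g S. g \<in> carrier G \<Longrightarrow> S \<subseteq> {0..n} \<Longrightarrow> \<Omega> (\<phi> g ` S) = \<Omega> S"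
    and \<psi>: "group_action G (facets_tilde n \<Omega>) \<psi>"
    and collapse_\<psi>: "\<And>g x. g \<in> carrier G \<Longrightarrow> x \<in> facets_tilde n \<Omega> \<Longrightarrow> collapse (\<psi> g x) = \<phi> g ` collapse x"
    using assms(4) by (auto simp: wsc_action_def)
  define N where "N = card (carrier G)"
  have "0 < N"
    using assms(2) by (auto simp: N_def card_gt_0_iff)
  obtain \<psi>' where \<psi>': "group_action G (stretch N (facets_tilde n \<Omega>)) \<psi>'"
    "\<forall>g\<in>carrier G. \<forall>y\<in>stretch N (facets_tilde n \<Omega>). \<psi>' g y = y \<longrightarrow> g = \<one>\<^bsub>G\<^esub>"
    "\<forall>g\<in>carrier G. \<forall>y\<in>stretch N (facets_tilde n \<Omega>). shrink N (\<psi>' g y) = \<psi> g (shrink N y)"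
    using ex_free_action_stretch[OF \<psi> assms(2) N_def] by blast
  define \<Omega>' where "\<Omega>' = scale_facets n \<Omega> N"
  have tilde': "facets_tilde n \<Omega>' = stretch N (facets_tilde n \<Omega>)"
    unfolding \<Omega>'_def using \<open>0 < N\<close> by (rule facets_tilde_scale_facets)
  have collapse_\<psi>': "collapse (\<psi>' g y) = \<phi> g ` collapse y"
    if "g \<in> carrier G" and "y \<in> stretch N (facets_tilde n \<Omega>)" for g y
  proof -
    have "collapse (\<psi>' g y) = collapse (\<psi> g (shrink N y))"
      using \<psi>'(3) that by (metis collapse_def fst_shrink)
    also have "\<dots> = \<phi> g ` collapse y"
      using collapse_\<psi> that by (simp add: mem_stretch_iff collapse_def)
    finally show ?thesis .
  qed
  show ?thesis
  proof (intro exI conjI)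
    show "wsc n \<Omega>'" "facets n \<Omega>' = facets n \<Omega>"
      unfolding \<Omega>'_def using assms(3) \<open>0 < N\<close> by (simp_all add: wsc_scale_facets facets_scale_facets)
    show "\<forall>S. S \<subseteq> {0..n} \<and> S \<notin> facets n \<Omega> \<longrightarrow> \<Omega>' S = \<Omega> S" "\<forall>F\<in>facets n \<Omega>. \<Omega> F \<le> \<Omega>' F"
      using \<open>0 < N\<close> by (simp_all add: \<Omega>'_def scale_facets_def)
    show "wsc_action G n \<Omega>' \<phi> \<psi>'"
      unfolding wsc_action_def tilde' unfolding \<Omega>'_def
      using \<phi> scale_facets_image[OF \<phi> \<Omega>_\<phi>] \<psi>'(1) collapse_\<psi>' by simp
    show "free_wsc_action G n \<Omega>' \<psi>'"
      unfolding free_wsc_action_def tilde' by (rule \<psi>'(2))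
    show "shrink N \<in> facets_tilde n \<Omega>' \<rightarrow> facets_tilde n \<Omega>"
      by (auto simp: tilde' mem_stretch_iff)
    show "\<forall>g\<in>carrier G. \<forall>x\<in>facets_tilde n \<Omega>'. shrink N (\<psi>' g x) = \<psi> g (shrink N x)"
      unfolding tilde' by (rule \<psi>'(3))
    show "\<forall>x\<in>facets_tilde n \<Omega>'. collapse (shrink N x) = collapse x"
      by (simp add: collapse_def)
  qed
qed

end
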